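(* Let $(\mathcal{G},\kappa)$ be a reaction network with species $\mathcal{S}=\{S_1,\dots,S_n\}$ whose positive recurrent irreducible components are $\Gamma_l=\{x\in\mathbb{Z}^{\mathcal{S}}_{\ge0}\mid\sum_{i}x_i=l\}$, $l\in\mathcal{I}$, with stationary distributions $\pi_l$ that are strictly positive on $\Gamma_l$, where $\mathcal{I}=\mathbb{Z}_{\ge1}$. Then the following are equivalent: (1) $(\mathcal{G},\kappa)$ has product-form stationary distribution, i.e. there are functions $f_i:\mathbb{Z}_{\ge 0}\to\mathbb{R}_{>0}$ ($S_i\in\mathcal{S}$) with $\pi_l(x)=Z_l^{-1}\prod_i f_i(x_i)$ for all $l\in\mathcal{I}$, $x\in\Gamma_l$, where $Z_l=\sum_{x\in\Gamma_l}\prod_if_i(x_i)$; (2) (a) for all $i$ with $i,i+1\in\mathcal{I}$, all $j,k$, and all $x,x+e_j-e_k\in\Gamma_i$, $y,y+e_j-e_k\in\Gamma_{i+1}$ with $x_j=y_j$, $x_k=y_k$: $\pi_i(x+e_j-e_k)\pi_{i+1}(y)=\pi_{i+1}(y+e_j-e_k)\pi_i(x)$; and (b) for all $i$ with $i,i+1,i+2\in\mathcal{I}$, all $j,k$, and all $x,z\in\Gamma_i$, $x+e_j,y,z+e_k,w\in\Gamma_{i+1}$, $y+e_j,w+e_k\in\Gamma_{i+2}$ with $x_j=y_j$ and $z_k=w_k$: $\pi_{i+1}(x+e_j)\pi_{i+1}(y)\pi_{i+2}(w+e_k)\pi_i(z)=\pi_{i+1}(z+e_k)\pi_{i+1}(w)\pi_{i+2}(y+e_j)\pi_i(x)$.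 Moreover, if instead $\mathcal{I}=\mathbb{Z}_{\ge q}$ for some $q\ge2$ (all other hypotheses unchanged), then (1) implies (2).
   Context: A reaction network $\mathcal{G}$ with rates $\kappa$ has a continuous-time Markov chain on $\mathbb{Z}^n_{\ge0}$; an irreducible component is a nonempty set $\Gamma$ such that for $x\in\Gamma$, $u$ is reachable from $x$ iff $u\in\Gamma$; on a positive recurrent irreducible component the stationary distribution is unique. $e_i$ denotes the $i$-th standard basis vector. *)

theory Defs
  imports Complex_Main "HOL-Library.Function_Algebras"
begin

(* States: vectors in Z^S_{>=0}, represented as functions 's => int that are nonnegative.
   The species set S is the finite type 's. *)

type_synonym 's state = "'s \<Rightarrow> int"

definition nonneg :: "'s state \<Rightarrow> bool" where
  "nonneg x \<longleftrightarrow> (\<forall>s. 0 \<le> x s)"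

definition e :: "'s \<Rightarrow> 's state" where
  "e j = (\<lambda>s. if s = j then 1 else 0)"

definition Gam :: "nat \<Rightarrow> ('s::finite) state set" where
  "Gam l = {x. nonneg x \<and> (\<Sum>s\<in>UNIV. x s) = int l}"

definition network :: "('s state \<times> 's state) set \<Rightarrow> ('s state \<times> 's state \<Rightarrow> real) \<Rightarrow> bool" where
  "network R \<kappa> \<longleftrightarrow> finite R \<and>
     (\<forall>(y, y')\<in>R. nonneg y \<and> nonneg y' \<and> y \<noteq> y') \<and> (\<forall>r\<in>R. \<kappa> r > 0)"

(* stochastic mass-action intensity of reaction r = (y, y') at state x:
   kappa_r * prod_s x_s (x_s - 1) ... (x_s - y_s + 1) *)
definition intensity :: "('s::finite state \<times> 's state \<Rightarrow> real) \<Rightarrow> 's state \<times> 's state \<Rightarrow> 's state \<Rightarrow> real" where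
  "intensity \<kappa> r x = \<kappa> r * (\<Prod>s\<in>UNIV. \<Prod>t\<in>{0..<nat (fst r s)}. real_of_int (x s - int t))"

definition qrate :: "('s::finite state \<times> 's state) set \<Rightarrow> ('s state \<times> 's state \<Rightarrow> real) \<Rightarrow> 's state \<Rightarrow> 's state \<Rightarrow> real" where
  "qrate R \<kappa> x u = (\<Sum>r\<in>{r\<in>R. x + (snd r - fst r) = u}. intensity \<kappa> r x)"

definition step :: "('s::finite state \<times> 's state) set \<Rightarrow> ('s state \<times> 's state \<Rightarrow> real) \<Rightarrow> 's state \<Rightarrow> 's state \<Rightarrow> bool" where
  "step R \<kappa> x u \<longleftrightarrow> nonneg x \<and> u \<noteq> x \<and> qrate R \<kappa> x u > 0"

definition reachable :: "('s::finite state \<times> 's state) set \<Rightarrow> ('s state \<times> 's state \<Rightarrow> real) \<Rightarrow> 's state \<Rightarrow> 's state \<Rightarrow> bool" where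
  "reachable R \<kappa> = (step R \<kappa>)\<^sup>*\<^sup>*"

definition irreducible_component :: "('s::finite state \<times> 's state) set \<Rightarrow> ('s state \<times> 's state \<Rightarrow> real) \<Rightarrow> 's state set \<Rightarrow> bool" where
  "irreducible_component R \<kappa> \<Gamma> \<longleftrightarrow> \<Gamma> \<noteq> {} \<and> (\<forall>x\<in>\<Gamma>. nonneg x) \<and>
     (\<forall>x\<in>\<Gamma>. \<forall>u. reachable R \<kappa> x u \<longleftrightarrow> u \<in> \<Gamma>)"

definition stationary :: "('s::finite state \<times> 's state) set \<Rightarrow> ('s state \<times> 's state \<Rightarrow> real) \<Rightarrow> 's state set \<Rightarrow> ('s state \<Rightarrow> real) \<Rightarrow> bool" where
  "stationary R \<kappa> \<Gamma> \<pi> \<longleftrightarrow> (\<forall>x. 0 \<le> \<pi> x) \<and> (\<forall>x. x \<notin> \<Gamma> \<longrightarrow> \<pi> x = 0) \<and>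
     finite \<Gamma> \<and> (\<Sum>x\<in>\<Gamma>. \<pi> x) = 1 \<and>
     (\<forall>x\<in>\<Gamma>. \<pi> x * (\<Sum>r\<in>R. intensity \<kappa> r x) =
        (\<Sum>r\<in>R. \<pi> (x - (snd r - fst r)) * intensity \<kappa> r (x - (snd r - fst r))))"

(* standing hypotheses: (G, kappa) is a reaction network, and for every l in I,
   Gamma_l is an irreducible component carrying the stationary distribution pi l,
   which is strictly positive on Gamma_l (positive recurrence is automatic since
   Gamma_l is finite) *)
definition hyps :: "('s::finite state \<times> 's state) set \<Rightarrow> ('s state \<times> 's state \<Rightarrow> real) \<Rightarrow> (nat \<Rightarrow> 's state \<Rightarrow> real) \<Rightarrow> nat set \<Rightarrow> bool" where
  "hyps R \<kappa> \<pi> I \<longleftrightarrow> network R \<kappa> \<and>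
     (\<forall>l\<in>I. irreducible_component R \<kappa> (Gam l) \<and> stationary R \<kappa> (Gam l) (\<pi> l) \<and>
        (\<forall>x\<in>Gam l. \<pi> l x > 0))"

definition product_form :: "(nat \<Rightarrow> ('s::finite) state \<Rightarrow> real) \<Rightarrow> nat set \<Rightarrow> bool" where
  "product_form \<pi> I \<longleftrightarrow> (\<exists>f :: 's \<Rightarrow> nat \<Rightarrow> real. (\<forall>i n. f i n > 0) \<and>
     (\<forall>l\<in>I. \<forall>x\<in>Gam l.
        \<pi> l x = (\<Prod>i\<in>UNIV. f i (nat (x i))) / (\<Sum>z\<in>Gam l. \<Prod>i\<in>UNIV. f i (nat (z i)))))"

definition cond2a :: "(nat \<Rightarrow> ('s::finite) state \<Rightarrow> real) \<Rightarrow> nat set \<Rightarrow> bool" where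
  "cond2a \<pi> I \<longleftrightarrow> (\<forall>i. i \<in> I \<and> i + 1 \<in> I \<longrightarrow> (\<forall>j k x y.
     x \<in> Gam i \<and> x + e j - e k \<in> Gam i \<and> y \<in> Gam (i + 1) \<and> y + e j - e k \<in> Gam (i + 1) \<and>
     x j = y j \<and> x k = y k \<longrightarrow>
     \<pi> i (x + e j - e k) * \<pi> (i + 1) y = \<pi> (i + 1) (y + e j - e k) * \<pi> i x))"

definition cond2b :: "(nat \<Rightarrow> ('s::finite) state \<Rightarrow> real) \<Rightarrow> nat set \<Rightarrow> bool" where
  "cond2b \<pi> I \<longleftrightarrow> (\<forall>i. i \<in> I \<and> i + 1 \<in> I \<and> i + 2 \<in> I \<longrightarrow> (\<forall>j k x y z w.
     x \<in> Gam i \<and> z \<in> Gam i \<and> x + e j \<in> Gam (i + 1) \<and> y \<in> Gam (i + 1) \<and>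
     z + e k \<in> Gam (i + 1) \<and> w \<in> Gam (i + 1) \<and>
     y + e j \<in> Gam (i + 2) \<and> w + e k \<in> Gam (i + 2) \<and> x j = y j \<and> z k = w k \<longrightarrow>
     \<pi> (i + 1) (x + e j) * \<pi> (i + 1) y * \<pi> (i + 2) (w + e k) * \<pi> i z =
     \<pi> (i + 1) (z + e k) * \<pi> (i + 1) w * \<pi> (i + 2) (y + e j) * \<pi> i x))"

end

theory Submission
  imports Defs
begin

text \<open>
  Write \<open>\<rho>\<^sub>l(j, x) = \<pi>\<^sub>l\<^sub>+\<^sub>1(x + e\<^sub>j) / \<pi>\<^sub>l(x)\<close>. Under a product form both sides of (2)(a) and of
  (2)(b) are, coordinate by coordinate, the same product of factors \<open>f\<^sub>s(\<cdot>)\<close> divided by the same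
  normalising constants; this works for any index set. Conversely, (2)(b) says
  \<open>\<rho>\<^sub>i(j,x) \<rho>\<^sub>i\<^sub>+\<^sub>1(k,w) = \<rho>\<^sub>i(k,z) \<rho>\<^sub>i\<^sub>+\<^sub>1(j,y)\<close> whenever \<open>x\<^sub>j = y\<^sub>j\<close> and \<open>z\<^sub>k = w\<^sub>k\<close>. Taking \<open>k = j\<close>
  shows that \<open>\<rho>\<^sub>l(j,x)\<close> depends only on \<open>x\<^sub>j\<close>; in general it shows that \<open>\<rho>\<^sub>l\<^sub>+\<^sub>1(j,a) / \<rho>\<^sub>l(j,a)\<close> does
  not depend on \<open>(j,a)\<close>, so \<open>\<rho>\<^sub>l(j,a) = g\<^sub>l r\<^sub>j(a)\<close>. With \<open>f\<^sub>j(a) = r\<^sub>j(0) \<cdots> r\<^sub>j(a-1)\<close>, induction on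
  \<open>l\<close> shows that \<open>\<pi>\<^sub>l\<close> is proportional to \<open>\<Prod>\<^sub>j f\<^sub>j(x\<^sub>j)\<close>; the base case \<open>l = 1\<close> uses that
  \<open>\<pi>\<^sub>1(e\<^sub>s) \<pi>\<^sub>1(e\<^sub>t) / \<pi>\<^sub>2(e\<^sub>s + e\<^sub>t)\<close> is symmetric in \<open>s, t\<close>.
\<close>

lemma e_apply: "e j s = (if s = j then 1 else 0)"
  by (simp add: e_def)

lemma Gam_iff: "x \<in> Gam l \<longleftrightarrow> (\<forall>s. 0 \<le> x s) \<and> (\<Sum>s\<in>UNIV. x s) = int l"
  by (simp add: Gam_def nonneg_def)

lemma Gam_add_e: "x \<in> Gam l \<Longrightarrow> x + e j \<in> Gam (Suc l)"
  unfolding Gam_iff by (auto simp: sum.distrib e_apply)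

lemma Gam_diff_e: "x \<in> Gam (Suc l) \<Longrightarrow> 1 \<le> x j \<Longrightarrow> x - e j \<in> Gam l"
  unfolding Gam_iff by (auto simp: sum_subtractf e_apply)

lemma Gam_coordinate_le: "(x :: 's::finite state) \<in> Gam l \<Longrightarrow> x j \<le> int l"
  unfolding Gam_iff by (metis UNIV_I finite member_le_sum)

lemma Gam_0: "Gam 0 = {0 :: 's::finite state}"
  by (auto simp: Gam_iff sum_nonneg_eq_0_iff fun_eq_iff)

lemma Gam_Suc_obtain_positive:
  assumes "(x :: 's::finite state) \<in> Gam (Suc l)"
  obtains j where "1 \<le> x j"
proof -
  have "x \<noteq> 0"
    using assms by (auto simp: Gam_iff)
  then obtain j where "x j \<noteq> 0"
    by (auto simp: fun_eq_iff)
  moreover have "0 \<le> x j"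
    using assms by (simp add: Gam_iff)
  ultimately have "1 \<le> x j"
    by linarith
  then show ?thesis
    by (rule that)
qed

lemma e_Gam_1: "e j \<in> Gam 1"
  using Gam_add_e[of 0 0 j] by (simp add: Gam_0)

lemma Gam_1_obtain_e:
  assumes "(x :: 's::finite state) \<in> Gam 1"
  obtains t where "x = e t"
proof -
  obtain t where "1 \<le> x t"
    using assms Gam_Suc_obtain_positive[of x 0] by auto
  then have "x - e t = 0"
    using Gam_diff_e[of x 0 t] assms by (simp add: Gam_0)
  then show ?thesis
    using that by (simp add: algebra_simps)
qed

definition pair_state :: "'s \<Rightarrow> 's \<Rightarrow> nat \<Rightarrow> nat \<Rightarrow> 's state" where
  "pair_state j k a b = (\<lambda>s. int a * e j s + int b * e k s)"

lemma pair_state_Gam: "pair_state j k a b \<in> Gam (a + b)"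
  by (simp add: Gam_iff pair_state_def sum.distrib e_apply flip: sum_distrib_left)

definition product_weight :: "('s::finite \<Rightarrow> nat \<Rightarrow> real) \<Rightarrow> 's state \<Rightarrow> real" where
  "product_weight f x = (\<Prod>i\<in>UNIV. f i (nat (x i)))"

lemma product_weight_exchange:
  assumes "\<And>s. (x s = y s \<and> x' s = y' s) \<or> (x' s = x s \<and> y' s = y s)"
  shows "product_weight f x' * product_weight f y = product_weight f y' * product_weight f x"
proof -
  have "f s (nat (x' s)) * f s (nat (y s)) = f s (nat (y' s)) * f s (nat (x s))" for s
    using assms[of s] by (metis mult.commute)
  then show ?thesis
    unfolding product_weight_def prod.distrib[symmetric] by simp
qed

lemma product_form_obtain:
  fixes \<pi> :: "nat \<Rightarrow> ('s::finite) state \<Rightarrow> real"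
  assumes "product_form \<pi> I"
  obtains f where "\<And>l x. l \<in> I \<Longrightarrow> x \<in> Gam l \<Longrightarrow>
    \<pi> l x = product_weight f x / (\<Sum>z\<in>Gam l. product_weight f z)"
  using assms unfolding product_form_def product_weight_def by blast

lemma product_form_imp_cond2a:
  fixes \<pi> :: "nat \<Rightarrow> ('s::finite) state \<Rightarrow> real"
  assumes "product_form \<pi> I"
  shows "cond2a \<pi> I"
  unfolding cond2a_def
proof (intro allI impI)
  fix i and j k :: 's and x y :: "'s state"
  assume i: "i \<in> I \<and> i + 1 \<in> I"
    and h: "x \<in> Gam i \<and> x + e j - e k \<in> Gam i \<and> y \<in> Gam (i + 1) \<and>
      y + e j - e k \<in> Gam (i + 1) \<and> x j = y j \<and> x k = y k"
  obtain f where pf: "\<And>l x. l \<in> I \<Longrightarrow> x \<in> Gam l \<Longrightarrow>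
      \<pi> l x = product_weight f x / (\<Sum>z\<in>Gam l. product_weight f z)"
    using product_form_obtain[OF assms] by metis
  have "product_weight f (x + e j - e k) * product_weight f y =
      product_weight f (y + e j - e k) * product_weight f x"
    by (rule product_weight_exchange) (use h in \<open>auto simp: e_apply\<close>)
  then show "\<pi> i (x + e j - e k) * \<pi> (i + 1) y = \<pi> (i + 1) (y + e j - e k) * \<pi> i x"
    using i h by (simp add: pf)
qed

lemma product_form_imp_cond2b:
  fixes \<pi> :: "nat \<Rightarrow> ('s::finite) state \<Rightarrow> real"
  assumes "product_form \<pi> I"
  shows "cond2b \<pi> I"
  unfolding cond2b_def
proof (intro allI impI)
  fix i and j k :: 's and x y z w :: "'s state"
  assume i: "i \<in> I \<and> i + 1 \<in> I \<and> i + 2 \<in> I"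
    and h: "x \<in> Gam i \<and> z \<in> Gam i \<and> x + e j \<in> Gam (i + 1) \<and> y \<in> Gam (i + 1) \<and>
      z + e k \<in> Gam (i + 1) \<and> w \<in> Gam (i + 1) \<and>
      y + e j \<in> Gam (i + 2) \<and> w + e k \<in> Gam (i + 2) \<and> x j = y j \<and> z k = w k"
  obtain f where pf: "\<And>l x. l \<in> I \<Longrightarrow> x \<in> Gam l \<Longrightarrow>
      \<pi> l x = product_weight f x / (\<Sum>z\<in>Gam l. product_weight f z)"
    using product_form_obtain[OF assms] by metis
  have "product_weight f (x + e j) * product_weight f y =
      product_weight f (y + e j) * product_weight f x"
    by (rule product_weight_exchange) (use h in \<open>auto simp: e_apply\<close>)
  moreover have "product_weight f (w + e k) * product_weight f z =
      product_weight f (z + e k) * product_weight f w"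
    by (rule product_weight_exchange) (use h in \<open>auto simp: e_apply\<close>)
  ultimately show "\<pi> (i + 1) (x + e j) * \<pi> (i + 1) y * \<pi> (i + 2) (w + e k) * \<pi> i z =
      \<pi> (i + 1) (z + e k) * \<pi> (i + 1) w * \<pi> (i + 2) (y + e j) * \<pi> i x"
    using i h by (simp add: pf)
qed

lemma product_form_if_proportional:
  fixes \<pi> :: "nat \<Rightarrow> ('s::finite) state \<Rightarrow> real"
  assumes f_pos: "\<And>i n. f i n > 0"
    and total: "\<And>l. l \<in> I \<Longrightarrow> (\<Sum>x\<in>Gam l. \<pi> l x) = 1"
    and proportional: "\<And>l. l \<in> I \<Longrightarrow> \<exists>c. \<forall>x\<in>Gam l. \<pi> l x = c * product_weight f x"
  shows "product_form \<pi> I"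
proof -
  have "\<pi> l x = product_weight f x / (\<Sum>z\<in>Gam l. product_weight f z)"
    if l: "l \<in> I" and x: "x \<in> Gam l" for l x
  proof -
    obtain c where c: "\<forall>x\<in>Gam l. \<pi> l x = c * product_weight f x"
      using proportional[OF l] by blast
    have "c * (\<Sum>z\<in>Gam l. product_weight f z) = 1"
      using total[OF l] c by (simp add: sum_distrib_left)
    then have "c = 1 / (\<Sum>z\<in>Gam l. product_weight f z)"
      by (auto simp: eq_divide_eq)
    then show ?thesis
      using c x by simp
  qed
  then show ?thesis
    unfolding product_form_def product_weight_def using f_pos by blast
qed

lemma product_weight_add_e:
  assumes "0 \<le> x j" and "\<And>a. f j (Suc a) = f j a * g a"
  shows "product_weight f (x + e j) = product_weight f x * g (nat (x j))"
proof -
  have "(\<Prod>i\<in>UNIV - {j}. f i (nat ((x + e j) i))) = (\<Prod>i\<in>UNIV - {j}. f i (nat (x i)))"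
    by (rule prod.cong) (auto simp: e_apply)
  moreover have "nat ((x + e j) j) = Suc (nat (x j))"
    using assms(1) by (simp add: e_apply)
  ultimately show ?thesis
    unfolding product_weight_def prod.remove[of UNIV j, simplified] by (simp add: assms(2))
qed

lemma ratio_constant_from:
  fixes u v :: "nat \<Rightarrow> 'a::idom"
  assumes step: "\<And>i. m \<le> i \<Longrightarrow> u i * v (Suc i) = v i * u (Suc i)"
    and nonzero: "\<And>i. m \<le> i \<Longrightarrow> v i \<noteq> 0"
    and "m \<le> l"
  shows "u l * v m = v l * u m"
  using \<open>m \<le> l\<close>
proof (induction l rule: dec_induct)
  case (step l)
  have "v l * (u (Suc l) * v m) = v (Suc l) * (u l * v m)"
    using step.hyps(1) assms(1) by (metis mult.assoc mult.commute)
  also have "\<dots> = v l * (v (Suc l) * u m)"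
    using step.IH by (simp add: ac_simps)
  finally show ?case
    using nonzero[OF step.hyps(1)] by simp
qed (simp add: mult.commute)

locale cond2b_two_species =
  fixes \<pi> :: "nat \<Rightarrow> ('s::finite) state \<Rightarrow> real" and s0 s1 :: 's
  assumes distinct_species: "s0 \<noteq> s1"
    and positive: "\<And>l x. 1 \<le> l \<Longrightarrow> x \<in> Gam l \<Longrightarrow> 0 < \<pi> l x"
    and cond2b: "cond2b \<pi> {1..}"
begin

definition other :: "'s \<Rightarrow> 's" where
  "other j = (if j = s0 then s1 else s0)"

lemma other_neq: "other j \<noteq> j"
  using distinct_species by (simp add: other_def)

definition rho :: "nat \<Rightarrow> 's \<Rightarrow> 's state \<Rightarrow> real" where
  "rho l j x = \<pi> (Suc l) (x + e j) / \<pi> l x"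

lemma rho_pos: "1 \<le> l \<Longrightarrow> x \<in> Gam l \<Longrightarrow> 0 < rho l j x"
  unfolding rho_def by (simp add: positive Gam_add_e)

lemma rho_exchange:
  assumes "1 \<le> i" "x \<in> Gam i" "z \<in> Gam i" "y \<in> Gam (Suc i)" "w \<in> Gam (Suc i)"
    and "x j = y j" "z k = w k"
  shows "rho i j x * rho (Suc i) k w = rho i k z * rho (Suc i) j y"
proof -
  have "\<pi> (i + 1) (x + e j) * \<pi> (i + 1) y * \<pi> (i + 2) (w + e k) * \<pi> i z =
      \<pi> (i + 1) (z + e k) * \<pi> (i + 1) w * \<pi> (i + 2) (y + e j) * \<pi> i x"
    by (rule cond2b[unfolded cond2b_def, rule_format])
      (use assms Gam_add_e in \<open>auto simp: numeral_2_eq_2\<close>)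
  moreover have "0 < \<pi> i x" "0 < \<pi> i z" "0 < \<pi> (Suc i) y" "0 < \<pi> (Suc i) w"
    using assms by (simp_all add: positive)
  ultimately show ?thesis
    unfolding rho_def by (simp add: field_simps numeral_2_eq_2)
qed

lemma rho_eq_if_coordinate_eq:
  assumes "1 \<le> i" "x \<in> Gam i" "x' \<in> Gam i" "x j = x' j"
  shows "rho i j x = rho i j x'"
proof -
  let ?y = "x + e (other j)"
  have "?y \<in> Gam (Suc i)" "?y j = x j"
    using assms(2) Gam_add_e other_neq[of j] by (auto simp: e_apply)
  then have "rho i j x * rho (Suc i) j ?y = rho i j x' * rho (Suc i) j ?y"
    using rho_exchange assms by metis
  moreover have "0 < rho (Suc i) j ?y"
    using \<open>?y \<in> Gam (Suc i)\<close> by (simp add: rho_pos)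
  ultimately show ?thesis
    by simp
qed

definition level_rate :: "nat \<Rightarrow> 's \<Rightarrow> nat \<Rightarrow> real" where
  "level_rate l j a = rho l j (pair_state j (other j) a (l - a))"

lemma pair_state_other_Gam: "a \<le> l \<Longrightarrow> pair_state j (other j) a (l - a) \<in> Gam l"
  using pair_state_Gam[of j "other j" a "l - a"] by simp

lemma pair_state_other_left [simp]: "pair_state j (other j) a b j = int a"
  using other_neq[of j] by (simp add: pair_state_def e_apply)

lemma rho_eq_level_rate:
  assumes "1 \<le> l" "x \<in> Gam l"
  shows "rho l j x = level_rate l j (nat (x j))"
proof -
  have "x j = int (nat (x j))"
    using assms(2) by (simp add: Gam_iff)
  moreover have "nat (x j) \<le> l"
    using Gam_coordinate_le[OF assms(2), of j] by simp
  ultimately show ?thesis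
    unfolding level_rate_def
    using assms pair_state_other_Gam by (metis rho_eq_if_coordinate_eq pair_state_other_left)
qed

lemma level_rate_pos: "1 \<le> l \<Longrightarrow> a \<le> l \<Longrightarrow> 0 < level_rate l j a"
  unfolding level_rate_def by (simp add: rho_pos pair_state_other_Gam)

lemma level_rate_exchange:
  assumes "1 \<le> i" "a \<le> i" "c \<le> i"
  shows "level_rate i j a * level_rate (Suc i) k c = level_rate i k c * level_rate (Suc i) j a"
  unfolding level_rate_def
  using assms by (intro rho_exchange) (auto simp: pair_state_other_Gam)

text \<open>\<open>max a 1\<close> is the lowest level in \<open>{1..}\<close> having states with \<open>x\<^sub>j = a\<close>.\<close>

definition rate :: "'s \<Rightarrow> nat \<Rightarrow> real" where
  "rate j a = level_rate (max a 1) j a / level_rate (max a 1) s0 0"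

lemma rate_pos: "0 < rate j a"
  unfolding rate_def by (simp add: level_rate_pos)

lemma level_rate_split:
  assumes "1 \<le> l" "a \<le> l"
  shows "level_rate l j a = level_rate l s0 0 * rate j a"
proof -
  have "level_rate l j a * level_rate (max a 1) s0 0 = level_rate l s0 0 * level_rate (max a 1) j a"
    by (rule ratio_constant_from[where m = "max a 1"])
      (use assms in \<open>auto simp: level_rate_exchange level_rate_pos less_imp_neq[symmetric]\<close>)
  then show ?thesis
    unfolding rate_def using level_rate_pos[of "max a 1" 0 s0] by (simp add: field_simps)
qed

definition weight :: "'s \<Rightarrow> nat \<Rightarrow> real" where
  "weight j a = (\<Prod>b<a. rate j b)"

lemma weight_pos: "0 < weight j a"
  unfolding weight_def by (simp add: rate_pos prod_pos)

lemma product_weight_add_e_weight: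
  "0 \<le> x j \<Longrightarrow> product_weight weight (x + e j) = product_weight weight x * rate j (nat (x j))"
  by (rule product_weight_add_e) (simp_all add: weight_def)

lemma level_1_symmetric:
  assumes "s \<noteq> t"
  shows "\<pi> 1 (e t) * level_rate 1 s 0 = \<pi> 1 (e s) * level_rate 1 t 0"
proof -
  have "level_rate 1 t 0 = \<pi> 2 (e s + e t) / \<pi> 1 (e s)"
    using rho_eq_level_rate[of 1 "e s" t, OF le_refl e_Gam_1] assms
    by (simp add: rho_def e_apply numeral_2_eq_2)
  moreover have "level_rate 1 s 0 = \<pi> 2 (e s + e t) / \<pi> 1 (e t)"
    using rho_eq_level_rate[of 1 "e t" s, OF le_refl e_Gam_1] assms
    by (simp add: rho_def e_apply numeral_2_eq_2 add.commute)
  moreover have "0 < \<pi> 1 (e s)" "0 < \<pi> 1 (e t)"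
    using positive[OF le_refl e_Gam_1] by simp_all
  ultimately show ?thesis
    by simp
qed

lemma level_1_proportional: "\<pi> 1 (e t) = \<pi> 1 (e s0) * rate t 0"
proof (cases "t = s0")
  case False
  then show ?thesis
    using level_1_symmetric[of s0 t] level_rate_pos[of 1 0 s0]
    unfolding rate_def by (simp add: field_simps)
qed (simp add: rate_def level_rate_pos less_imp_neq[symmetric])

lemma proportional_to_weight:
  assumes "1 \<le> l"
  shows "\<exists>c. \<forall>x\<in>Gam l. \<pi> l x = c * product_weight weight x"
  using assms
proof (induction l rule: dec_induct)
  case base
  have "\<pi> 1 x = \<pi> 1 (e s0) * product_weight weight x" if "x \<in> Gam 1" for x
  proof -
    obtain t where "x = e t"
      using \<open>x \<in> Gam 1\<close> by (rule Gam_1_obtain_e)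
    moreover have "product_weight weight (e t) = rate t 0"
      using product_weight_add_e_weight[of 0 t] by (simp add: product_weight_def weight_def)
    ultimately show ?thesis
      using level_1_proportional[of t] by simp
  qed
  then show ?case
    by blast
next
  case (step l)
  obtain c where c: "\<forall>x\<in>Gam l. \<pi> l x = c * product_weight weight x"
    using step.IH by blast
  have "\<pi> (Suc l) x = (level_rate l s0 0 * c) * product_weight weight x" if x: "x \<in> Gam (Suc l)" for x
  proof -
    obtain j where j: "1 \<le> x j"
      using x by (rule Gam_Suc_obtain_positive)
    define x' where "x' = x - e j"
    have x': "x' \<in> Gam l" "x = x' + e j"
      using Gam_diff_e[OF x j] by (simp_all add: x'_def)
    then have "\<pi> (Suc l) x = rho l j x' * \<pi> l x'"
      using positive[OF step.hyps(1) x'(1)] by (simp add: rho_def)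
    also have "\<dots> = level_rate l s0 0 * rate j (nat (x' j)) * (c * product_weight weight x')"
    proof -
      have "nat (x' j) \<le> l"
        using Gam_coordinate_le[OF x'(1), of j] by simp
      then have "rho l j x' = level_rate l s0 0 * rate j (nat (x' j))"
        using rho_eq_level_rate[OF step.hyps(1) x'(1)] level_rate_split[OF step.hyps(1)] by metis
      then show ?thesis
        using c x'(1) by simp
    qed
    also have "\<dots> = (level_rate l s0 0 * c) * product_weight weight x"
      using product_weight_add_e_weight[of x' j] x' by (simp add: Gam_iff)
    finally show ?thesis .
  qed
  then show ?case
    by blast
qed

end

lemma Gam_single_species:
  fixes x y :: "'s::finite state"
  assumes "\<And>a b :: 's. a = b" and "x \<in> Gam l" "y \<in> Gam l"
  shows "x = y"
proof
  fix s
  have "(UNIV :: 's set) = {s}"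
    using assms(1)[of _ s] by blast
  show "x s = y s"
    using assms(2,3) unfolding Gam_iff \<open>UNIV = {s}\<close> by simp
qed

lemma cond2b_imp_product_form:
  fixes \<pi> :: "nat \<Rightarrow> ('s::finite) state \<Rightarrow> real"
  assumes positive: "\<And>l x. 1 \<le> l \<Longrightarrow> x \<in> Gam l \<Longrightarrow> 0 < \<pi> l x"
    and total: "\<And>l. 1 \<le> l \<Longrightarrow> (\<Sum>x\<in>Gam l. \<pi> l x) = 1"
    and "cond2b \<pi> {1..}"
  shows "product_form \<pi> {1..}"
proof (cases "\<exists>s0 s1 :: 's. s0 \<noteq> s1")
  case True
  then obtain s0 s1 :: 's where "s0 \<noteq> s1"
    by blast
  then interpret cond2b_two_species \<pi> s0 s1
    using assms by unfold_locales
  show ?thesis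
    by (rule product_form_if_proportional[where f = weight])
      (use weight_pos total proportional_to_weight in auto)
next
  case False
  then have single_species: "\<And>a b :: 's. a = b"
    by blast
  have "\<exists>c. \<forall>x\<in>Gam l. \<pi> l x = c * product_weight (\<lambda>_ _. 1) x" for l
  proof (cases "Gam l = ({} :: 's state set)")
    case False
    then obtain y :: "'s state" where "y \<in> Gam l"
      by blast
    then show ?thesis
      using Gam_single_species[OF single_species]
      by (intro exI[of _ "\<pi> l y"]) (auto simp: product_weight_def)
  qed simp
  then show ?thesis
    by (intro product_form_if_proportional[where f = "\<lambda>_ _. 1"]) (simp_all add: total)
qed

theorem theorem3p6:
  shows "(\<forall>(R :: (('s::finite) state \<times> 's state) set) \<kappa> \<pi>. hyps R \<kappa> \<pi> {1..} \<longrightarrow>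
            (product_form \<pi> {1..} \<longleftrightarrow> cond2a \<pi> {1..} \<and> cond2b \<pi> {1..})) \<and>
         (\<forall>q (R :: ('s state \<times> 's state) set) \<kappa> \<pi>. q \<ge> 2 \<and> hyps R \<kappa> \<pi> {q..} \<longrightarrow>
            product_form \<pi> {q..} \<longrightarrow> cond2a \<pi> {q..} \<and> cond2b \<pi> {q..})"
proof (intro conjI allI impI)
  fix R :: "('s state \<times> 's state) set" and \<kappa> and \<pi> :: "nat \<Rightarrow> 's state \<Rightarrow> real"
  assume "hyps R \<kappa> \<pi> {1..}"
  then have "\<And>l x. 1 \<le> l \<Longrightarrow> x \<in> Gam l \<Longrightarrow> 0 < \<pi> l x"
    and "\<And>l. 1 \<le> l \<Longrightarrow> (\<Sum>x\<in>Gam l. \<pi> l x) = 1"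
    unfolding hyps_def stationary_def by auto
  then show "product_form \<pi> {1..} \<longleftrightarrow> cond2a \<pi> {1..} \<and> cond2b \<pi> {1..}"
    using product_form_imp_cond2a product_form_imp_cond2b cond2b_imp_product_form by blast
qed (simp_all add: product_form_imp_cond2a product_form_imp_cond2b)

end
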